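(* Let $I\subset\mathbb{R}$ be an interval and let $M,N\colon I^2\to I$ be continuous means such that $(M,N)$ is weakly contractive. Then there exists a unique mean $K\colon I^2\to I$ which is $(M,N)$-invariant, and the sequence of iterates $\big((M,N)^n\big)_{n\in\mathbb{N}}$ converges to $(K,K)$ uniformly on compact subsets of $I^2$.
   Context: A function $K\colon I^2\to\mathbb{R}$ is a mean in $I$ if $\min(x,y)\le K(x,y)\le\max(x,y)$ for all $x,y\in I$. $(M_n,N_n):=(M,N)^n$ denotes the $n$-th iterate of the map $(x,y)\mapsto(M(x,y),N(x,y))$. $(M,N)$ is weakly contractive if for all $x,y\in I$ with $x\ne y$ there exists a positive integer $n$ with $|M_n(x,y)-N_n(x,y)|<|x-y|$. A mean $K$ is $(M,N)$-invariant if $K(M(x,y),N(x,y))=K(x,y)$ for all $x,y\in I$. *)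

theory Defs
  imports "HOL-Analysis.Analysis"
begin

definition is_mean :: "real set \<Rightarrow> (real \<Rightarrow> real \<Rightarrow> real) \<Rightarrow> bool" where
  "is_mean I K \<longleftrightarrow> (\<forall>x\<in>I. \<forall>y\<in>I. min x y \<le> K x y \<and> K x y \<le> max x y)"

definition MN_iter :: "(real \<Rightarrow> real \<Rightarrow> real) \<Rightarrow> (real \<Rightarrow> real \<Rightarrow> real) \<Rightarrow> nat \<Rightarrow> real \<times> real \<Rightarrow> real \<times> real" where
  "MN_iter M N n = ((\<lambda>(x, y). (M x y, N x y)) ^^ n)"

definition weakly_contractive :: "real set \<Rightarrow> (real \<Rightarrow> real \<Rightarrow> real) \<Rightarrow> (real \<Rightarrow> real \<Rightarrow> real) \<Rightarrow> bool" where
  "weakly_contractive I M N \<longleftrightarrow>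
     (\<forall>x\<in>I. \<forall>y\<in>I. x \<noteq> y \<longrightarrow>
        (\<exists>n. n > 0 \<and> \<bar>fst (MN_iter M N n (x, y)) - snd (MN_iter M N n (x, y))\<bar> < \<bar>x - y\<bar>))"

definition invariant_mean :: "real set \<Rightarrow> (real \<Rightarrow> real \<Rightarrow> real) \<Rightarrow> (real \<Rightarrow> real \<Rightarrow> real) \<Rightarrow> (real \<Rightarrow> real \<Rightarrow> real) \<Rightarrow> bool" where
  "invariant_mean I M N K \<longleftrightarrow> (\<forall>x\<in>I. \<forall>y\<in>I. K (M x y) (N x y) = K x y)"

end

theory Submission
  imports Defs
begin

(*
  Because M and N are means, the interval spanned by the two coordinates of (M,N)^n(x,y)
  shrinks with n, so its length, the spread, decreases to some L.  The orbit stays in a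
  compact square inside I x I; at a limit point l of the orbit continuity of the iterates
  gives spread L along the whole orbit of l, which weak contractivity rules out unless
  L = 0.  Hence both coordinates converge to a common value K(x,y): it is a mean, it is
  invariant (the orbit of (M(x,y),N(x,y)) is the shifted orbit), and any invariant mean is
  squeezed between the coordinates of every iterate, hence equals K.  The spreads are
  continuous and decrease pointwise to 0, so by Dini's theorem the convergence is uniform
  on compact sets.
*)

lemma Dini_uniform_limit:
  fixes f :: "nat \<Rightarrow> 'a::topological_space \<Rightarrow> real"
  assumes "compact C"
    and cont: "\<And>n. continuous_on C (f n)"
    and dec: "\<And>n z. z \<in> C \<Longrightarrow> f (Suc n) z \<le> f n z"
    and lim: "\<And>z. z \<in> C \<Longrightarrow> (\<lambda>n. f n z) \<longlonglongrightarrow> 0"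
  shows "uniform_limit C f (\<lambda>_. 0) sequentially"
proof (rule uniform_limitI)
  fix e :: real assume "e > 0"
  have "\<exists>A. open A \<and> A \<inter> C = f n -` {..<e} \<inter> C" for n
    using continuous_on_open_invariant[THEN iffD1, OF cont, rule_format, OF open_lessThan] .
  then obtain A where A: "\<And>n. open (A n)" "\<And>n. A n \<inter> C = f n -` {..<e} \<inter> C"
    by metis
  have cover: "C \<subseteq> (\<Union>n. A n)"
  proof
    fix z assume "z \<in> C"
    have "\<forall>\<^sub>F n in sequentially. f n z < e"
      using order_tendstoD(2)[OF lim[OF \<open>z \<in> C\<close>] \<open>e > 0\<close>] .
    then obtain n where "f n z < e"
      unfolding eventually_sequentially by auto
    with A(2)[of n] \<open>z \<in> C\<close> show "z \<in> (\<Union>n. A n)" by blast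
  qed
  obtain ns where ns: "finite ns" "C \<subseteq> (\<Union>n\<in>ns. A n)"
    using compactE_image[OF \<open>compact C\<close>, of UNIV A] A(1) cover by auto
  have "\<forall>z\<in>C. dist (f n z) 0 < e" if n: "Max (insert 0 ns) \<le> n" for n
  proof
    fix z assume "z \<in> C"
    then obtain m where "m \<in> ns" "z \<in> A m"
      using ns by blast
    have "f n z \<le> f m z"
    proof (rule lift_Suc_antimono_le[of "\<lambda>k. f k z"])
      show "f (Suc k) z \<le> f k z" for k using dec[OF \<open>z \<in> C\<close>] .
      show "m \<le> n" using \<open>m \<in> ns\<close> ns(1) n by (meson Max_ge finite_insert insertI2 order_trans)
    qed
    also have "f m z < e"
      using A(2)[of m] \<open>z \<in> A m\<close> \<open>z \<in> C\<close> by blast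
    finally have "f n z < e" .
    moreover have "0 \<le> f n z"
      by (rule decseq_ge[OF _ lim[OF \<open>z \<in> C\<close>]]) (use dec[OF \<open>z \<in> C\<close>] in \<open>rule decseq_SucI\<close>)
    ultimately show "dist (f n z) 0 < e" by simp
  qed
  then show "\<forall>\<^sub>F n in sequentially. \<forall>z\<in>C. dist (f n z) 0 < e"
    unfolding eventually_sequentially by blast
qed

lemma is_meanD: "is_mean I K \<Longrightarrow> x \<in> I \<Longrightarrow> y \<in> I \<Longrightarrow> min x y \<le> K x y \<and> K x y \<le> max x y"
  by (simp add: is_mean_def)

lemma is_interval_min_max_subset:
  fixes x y :: real
  assumes "is_interval I" "x \<in> I" "y \<in> I"
  shows "{min x y..max x y} \<subseteq> I"
proof
  fix t assume "t \<in> {min x y..max x y}"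
  moreover have "min x y \<in> I" "max x y \<in> I"
    using assms(2,3) by (simp_all add: min_def max_def)
  ultimately show "t \<in> I"
    using mem_is_interval_1_I[OF assms(1), of "min x y" "max x y" t] by simp
qed

lemma MN_iter_0 [simp]: "MN_iter M N 0 z = z"
  by (simp add: MN_iter_def)

lemma MN_iter_Suc: "MN_iter M N (Suc n) z = (case MN_iter M N n z of (x, y) \<Rightarrow> (M x y, N x y))"
  by (simp add: MN_iter_def)

lemma MN_iter_add: "MN_iter M N (m + n) z = MN_iter M N m (MN_iter M N n z)"
  by (simp add: MN_iter_def funpow_add)

lemma MN_iter_Suc_right: "MN_iter M N (Suc n) (x, y) = MN_iter M N n (M x y, N x y)"
  using MN_iter_add[of M N n 1 "(x, y)"] by (simp add: MN_iter_def)

lemma MN_iter_in_Times: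
  assumes maps: "\<forall>x\<in>I. \<forall>y\<in>I. M x y \<in> I \<and> N x y \<in> I" and z: "z \<in> I \<times> I"
  shows "MN_iter M N n z \<in> I \<times> I"
proof (induction n)
  case 0
  show ?case using z by simp
next
  case (Suc n)
  obtain x y where xy: "MN_iter M N n z = (x, y)"
    by (cases "MN_iter M N n z")
  with Suc have "x \<in> I" "y \<in> I"
    by simp_all
  with maps xy show ?case
    by (simp add: MN_iter_Suc)
qed

lemma continuous_on_MN_iter:
  assumes maps: "\<forall>x\<in>I. \<forall>y\<in>I. M x y \<in> I \<and> N x y \<in> I"
    and "continuous_on (I \<times> I) (\<lambda>(x, y). M x y)" "continuous_on (I \<times> I) (\<lambda>(x, y). N x y)"
  shows "continuous_on (I \<times> I) (MN_iter M N n)"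
proof (induction n)
  case 0
  show ?case by (simp add: continuous_on_id')
next
  case (Suc n)
  have "continuous_on (I \<times> I) (\<lambda>z. ((\<lambda>(x, y). M x y) z, (\<lambda>(x, y). N x y) z))"
    using assms(2,3) by (rule continuous_on_Pair)
  then have step: "continuous_on (I \<times> I) (\<lambda>(x, y). (M x y, N x y))"
    by (simp add: case_prod_beta')
  have "MN_iter M N (Suc n) = (\<lambda>z. (\<lambda>(x, y). (M x y, N x y)) (MN_iter M N n z))"
    by (simp add: fun_eq_iff MN_iter_Suc)
  moreover have "MN_iter M N n ` (I \<times> I) \<subseteq> I \<times> I"
    using MN_iter_in_Times[OF maps] by blast
  ultimately show ?case
    using continuous_on_compose2[OF step Suc] by simp
qed

lemma invariant_mean_MN_iter:
  assumes maps: "\<forall>x\<in>I. \<forall>y\<in>I. M x y \<in> I \<and> N x y \<in> I"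
    and inv: "invariant_mean I M N K" and z: "z \<in> I \<times> I"
  shows "case_prod K (MN_iter M N n z) = case_prod K z"
proof (induction n)
  case (Suc n)
  obtain x y where xy: "MN_iter M N n z = (x, y)"
    by (cases "MN_iter M N n z")
  with MN_iter_in_Times[OF maps z, of n] have "x \<in> I" "y \<in> I"
    by simp_all
  then show ?case
    using xy Suc inv by (simp add: MN_iter_Suc invariant_mean_def)
qed simp

lemma invariant_mean_between_MN_iter:
  assumes maps: "\<forall>x\<in>I. \<forall>y\<in>I. M x y \<in> I \<and> N x y \<in> I"
    and "is_mean I K" and "invariant_mean I M N K" and z: "z \<in> I \<times> I"
  shows "case_prod min (MN_iter M N n z) \<le> case_prod K z \<and> case_prod K z \<le> case_prod max (MN_iter M N n z)"
proof -
  obtain x y where xy: "MN_iter M N n z = (x, y)"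
    by (cases "MN_iter M N n z")
  with MN_iter_in_Times[OF maps z, of n] have "x \<in> I" "y \<in> I"
    by simp_all
  have "case_prod K z = K x y"
    using invariant_mean_MN_iter[OF maps assms(3) z, of n] xy by simp
  then show ?thesis
    using is_meanD[OF assms(2) \<open>x \<in> I\<close> \<open>y \<in> I\<close>] xy by simp
qed

definition spread :: "real \<times> real \<Rightarrow> real" where
  "spread p = \<bar>fst p - snd p\<bar>"

lemma spread_eq_max_minus_min: "spread p = case_prod max p - case_prod min p"
  by (cases p) (simp add: spread_def max_def min_def)

lemma tendsto_spread [tendsto_intros]:
  "(f \<longlongrightarrow> l) F \<Longrightarrow> ((\<lambda>x. spread (f x)) \<longlongrightarrow> spread l) F"
  unfolding spread_def by (intro tendsto_intros)

lemma continuous_on_spread [continuous_intros]: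
  "continuous_on S f \<Longrightarrow> continuous_on S (\<lambda>x. spread (f x))"
  unfolding spread_def by (intro continuous_intros)

lemma dist_diagonal_le_spread:
  assumes "case_prod min p \<le> k" "k \<le> case_prod max p"
  shows "dist p (k, k) \<le> spread p"
proof (cases p)
  case (Pair a b)
  have "dist p (k, k) = sqrt ((dist a k)\<^sup>2 + (dist b k)\<^sup>2)"
    by (simp add: Pair dist_Pair_Pair)
  also have "\<dots> \<le> \<bar>a - k\<bar> + \<bar>b - k\<bar>"
    using sqrt_sum_squares_le_sum_abs by (simp add: dist_real_def)
  also have "\<dots> = \<bar>a - b\<bar>"
    using assms unfolding Pair by (cases "a \<le> b") (simp_all add: min_def max_def)
  finally show ?thesis by (simp add: Pair spread_def)
qed

definition MN_limit :: "(real \<Rightarrow> real \<Rightarrow> real) \<Rightarrow> (real \<Rightarrow> real \<Rightarrow> real) \<Rightarrow> real \<Rightarrow> real \<Rightarrow> real" where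
  "MN_limit M N x y = lim (\<lambda>n. fst (MN_iter M N n (x, y)))"

lemma MN_limit_eqI:
  assumes "(\<lambda>n. MN_iter M N n (x, y)) \<longlonglongrightarrow> (k, k)"
  shows "MN_limit M N x y = k"
  using tendsto_fst[OF assms] unfolding MN_limit_def by (simp add: limI)

locale mean_pair =
  fixes I :: "real set" and M N :: "real \<Rightarrow> real \<Rightarrow> real"
  assumes maps_into: "\<forall>x\<in>I. \<forall>y\<in>I. M x y \<in> I \<and> N x y \<in> I"
    and mean_M: "is_mean I M" and mean_N: "is_mean I N"
begin

lemma MN_iter_Suc_nested:
  assumes z: "z \<in> I \<times> I"
  shows "case_prod min (MN_iter M N n z) \<le> case_prod min (MN_iter M N (Suc n) z)"
    and "case_prod max (MN_iter M N (Suc n) z) \<le> case_prod max (MN_iter M N n z)"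
proof -
  obtain x y where xy: "MN_iter M N n z = (x, y)"
    by (cases "MN_iter M N n z")
  with MN_iter_in_Times[OF maps_into z, of n] have "x \<in> I" "y \<in> I"
    by simp_all
  with is_meanD[OF mean_M \<open>x \<in> I\<close> \<open>y \<in> I\<close>] is_meanD[OF mean_N \<open>x \<in> I\<close> \<open>y \<in> I\<close>] xy
  show "case_prod min (MN_iter M N n z) \<le> case_prod min (MN_iter M N (Suc n) z)"
    and "case_prod max (MN_iter M N (Suc n) z) \<le> case_prod max (MN_iter M N n z)"
    by (simp_all add: MN_iter_Suc)
qed

lemma spread_MN_iter_Suc_le:
  "z \<in> I \<times> I \<Longrightarrow> spread (MN_iter M N (Suc n) z) \<le> spread (MN_iter M N n z)"
  using MN_iter_Suc_nested[of z n] unfolding spread_eq_max_minus_min by linarith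

lemma MN_iter_in_square:
  assumes z: "z \<in> I \<times> I"
  defines "J \<equiv> {case_prod min z..case_prod max z}"
  shows "MN_iter M N n z \<in> J \<times> J"
proof -
  obtain a b where ab: "MN_iter M N n z = (a, b)"
    by (cases "MN_iter M N n z")
  have "case_prod min z \<le> min a b"
    using lift_Suc_mono_le[of "\<lambda>k. case_prod min (MN_iter M N k z)", OF MN_iter_Suc_nested(1)[OF z], of 0 n]
    by (simp add: ab)
  moreover have "max a b \<le> case_prod max z"
    using lift_Suc_antimono_le[of "\<lambda>k. case_prod max (MN_iter M N k z)", OF MN_iter_Suc_nested(2)[OF z], of 0 n]
    by (simp add: ab)
  moreover have "min a b \<le> a" "min a b \<le> b" "a \<le> max a b" "b \<le> max a b"
    by simp_all
  ultimately show ?thesis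
    unfolding J_def ab mem_Times_iff atLeastAtMost_iff fst_conv snd_conv by linarith
qed

lemma MN_iter_convergent_subseq:
  assumes "is_interval I" and z: "z \<in> I \<times> I"
  obtains l r where "l \<in> I \<times> I" "strict_mono r" "(\<lambda>n. MN_iter M N (r n) z) \<longlonglongrightarrow> l"
proof -
  obtain x y where xy: "z = (x, y)" "x \<in> I" "y \<in> I"
    using z by (cases z) simp
  define J where "J = {case_prod min z..case_prod max z}"
  have "J \<subseteq> I"
    unfolding J_def xy using is_interval_min_max_subset[OF assms(1) xy(2,3)] by simp
  have "compact (J \<times> J)"
    unfolding J_def by (intro compact_Times compact_Icc)
  moreover have "\<forall>n. MN_iter M N n z \<in> J \<times> J"
    using MN_iter_in_square[OF z] unfolding J_def by blast
  ultimately obtain l r where l: "l \<in> J \<times> J" "strict_mono r" "((\<lambda>n. MN_iter M N n z) \<circ> r) \<longlonglongrightarrow> l"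
    by (rule seq_compactE[OF compact_imp_seq_compact])
  from l(1) \<open>J \<subseteq> I\<close> have "l \<in> I \<times> I"
    by auto
  with l(2,3) show thesis
    by (intro that) (simp_all add: comp_def)
qed

end

locale contractive_mean_pair = mean_pair +
  assumes interval: "is_interval I"
    and cont_M: "continuous_on (I \<times> I) (\<lambda>(x, y). M x y)"
    and cont_N: "continuous_on (I \<times> I) (\<lambda>(x, y). N x y)"
    and contractive: "weakly_contractive I M N"
begin

lemma spread_at_limit_point:
  assumes z: "z \<in> I \<times> I" and r: "strict_mono r"
    and l: "(\<lambda>n. MN_iter M N (r n) z) \<longlonglongrightarrow> l" "l \<in> I \<times> I"
    and L: "(\<lambda>n. spread (MN_iter M N n z)) \<longlonglongrightarrow> L"
  shows "spread (MN_iter M N k l) = L"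
proof -
  have "(\<lambda>n. MN_iter M N k (MN_iter M N (r n) z)) \<longlonglongrightarrow> MN_iter M N k l"
    using continuous_on_tendsto_compose[OF continuous_on_MN_iter[OF maps_into cont_M cont_N] l]
      MN_iter_in_Times[OF maps_into z] by (simp add: always_eventually)
  then have "(\<lambda>n. spread (MN_iter M N (k + r n) z)) \<longlonglongrightarrow> spread (MN_iter M N k l)"
    by (simp add: MN_iter_add tendsto_spread)
  moreover have "strict_mono (\<lambda>n. k + r n)"
    using r by (simp add: strict_mono_def)
  then have "(\<lambda>n. spread (MN_iter M N (k + r n) z)) \<longlonglongrightarrow> L"
    using LIMSEQ_subseq_LIMSEQ[OF L] by (simp add: comp_def)
  ultimately show ?thesis
    by (rule LIMSEQ_unique)
qed

lemma spread_MN_iter_tendsto_0: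
  assumes z: "z \<in> I \<times> I"
  shows "(\<lambda>n. spread (MN_iter M N n z)) \<longlonglongrightarrow> 0"
proof -
  have dec: "decseq (\<lambda>n. spread (MN_iter M N n z))"
    using spread_MN_iter_Suc_le[OF z] by (rule decseq_SucI)
  have nonneg: "\<forall>n. 0 \<le> spread (MN_iter M N n z)"
    by (simp add: spread_def)
  obtain L where L: "(\<lambda>n. spread (MN_iter M N n z)) \<longlonglongrightarrow> L"
    using decseq_convergent[OF dec nonneg] by blast
  obtain l r where l: "l \<in> I \<times> I" "strict_mono r" "(\<lambda>n. MN_iter M N (r n) z) \<longlonglongrightarrow> l"
    by (rule MN_iter_convergent_subseq[OF interval z])
  obtain a b where ab: "l = (a, b)" "a \<in> I" "b \<in> I"
    using l(1) by (cases l) simp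
  have spread_l: "spread (MN_iter M N k (a, b)) = L" for k
    using spread_at_limit_point[OF z l(2,3,1) L] ab(1) by simp
  have "L = 0"
  proof (rule ccontr)
    assume "L \<noteq> 0"
    then have "a \<noteq> b"
      using spread_l[of 0] by (auto simp: spread_def)
    then obtain k where "spread (MN_iter M N k (a, b)) < spread (a, b)"
      using contractive[unfolded weakly_contractive_def, rule_format, OF ab(2,3)]
      unfolding spread_def by auto
    then show False
      using spread_l[of k] spread_l[of 0] by simp
  qed
  with L show ?thesis
    by simp
qed

lemma MN_iter_tendsto_diagonal:
  assumes z: "z \<in> I \<times> I"
  shows "\<exists>k. (\<forall>n. case_prod min (MN_iter M N n z) \<le> k \<and> k \<le> case_prod max (MN_iter M N n z))
    \<and> (\<lambda>n. MN_iter M N n z) \<longlonglongrightarrow> (k, k)"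
proof -
  define lo where "lo n = case_prod min (MN_iter M N n z)" for n
  define hi where "hi n = case_prod max (MN_iter M N n z)" for n
  have "\<exists>k. ((\<forall>n. lo n \<le> k) \<and> lo \<longlonglongrightarrow> k) \<and> ((\<forall>n. k \<le> hi n) \<and> hi \<longlonglongrightarrow> k)"
  proof (rule nested_sequence_unique)
    show "\<forall>n. lo n \<le> lo (Suc n)" "\<forall>n. hi (Suc n) \<le> hi n"
      using MN_iter_Suc_nested[OF z] unfolding lo_def hi_def by simp_all
    show "\<forall>n. lo n \<le> hi n"
      unfolding lo_def hi_def by (auto split: prod.split simp: min_le_iff_disj)
    have "lo n - hi n = - spread (MN_iter M N n z)" for n
      unfolding lo_def hi_def spread_eq_max_minus_min by (simp split: prod.split)
    then show "(\<lambda>n. lo n - hi n) \<longlonglongrightarrow> 0"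
      using tendsto_minus[OF spread_MN_iter_tendsto_0[OF z]] by simp
  qed
  then obtain k where k: "\<forall>n. lo n \<le> k" "lo \<longlonglongrightarrow> k" "\<forall>n. k \<le> hi n" "hi \<longlonglongrightarrow> k"
    by blast
  have "lo n \<le> fst (MN_iter M N n z) \<and> fst (MN_iter M N n z) \<le> hi n"
    and "lo n \<le> snd (MN_iter M N n z) \<and> snd (MN_iter M N n z) \<le> hi n" for n
    unfolding lo_def hi_def by (simp_all split: prod.split)
  then have "(\<lambda>n. fst (MN_iter M N n z)) \<longlonglongrightarrow> k" "(\<lambda>n. snd (MN_iter M N n z)) \<longlonglongrightarrow> k"
    using real_tendsto_sandwich[OF _ _ k(2) k(4)] by (simp_all add: always_eventually)
  from tendsto_Pair[OF this] have "(\<lambda>n. MN_iter M N n z) \<longlonglongrightarrow> (k, k)"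
    by simp
  with k(1,3) show ?thesis
    unfolding lo_def hi_def by blast
qed

lemma
  assumes "x \<in> I" "y \<in> I"
  shows MN_limit_between: "case_prod min (MN_iter M N n (x, y)) \<le> MN_limit M N x y
      \<and> MN_limit M N x y \<le> case_prod max (MN_iter M N n (x, y))"
    and tendsto_MN_iter_MN_limit:
      "(\<lambda>n. MN_iter M N n (x, y)) \<longlonglongrightarrow> (MN_limit M N x y, MN_limit M N x y)"
proof -
  have "(x, y) \<in> I \<times> I"
    using assms by simp
  then obtain k
    where bounds: "\<forall>n. case_prod min (MN_iter M N n (x, y)) \<le> k \<and> k \<le> case_prod max (MN_iter M N n (x, y))"
      and conv: "(\<lambda>n. MN_iter M N n (x, y)) \<longlonglongrightarrow> (k, k)"
    using MN_iter_tendsto_diagonal by blast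
  moreover have "MN_limit M N x y = k"
    using conv by (rule MN_limit_eqI)
  ultimately show "case_prod min (MN_iter M N n (x, y)) \<le> MN_limit M N x y
      \<and> MN_limit M N x y \<le> case_prod max (MN_iter M N n (x, y))"
    and "(\<lambda>n. MN_iter M N n (x, y)) \<longlonglongrightarrow> (MN_limit M N x y, MN_limit M N x y)"
    by simp_all
qed

lemma mean_MN_limit: "is_mean I (MN_limit M N)"
  unfolding is_mean_def
proof (intro ballI)
  fix x y assume "x \<in> I" "y \<in> I"
  from MN_limit_between[OF this, of 0] show "min x y \<le> MN_limit M N x y \<and> MN_limit M N x y \<le> max x y"
    by simp
qed

lemma MN_limit_in: "x \<in> I \<Longrightarrow> y \<in> I \<Longrightarrow> MN_limit M N x y \<in> I"
  using is_interval_min_max_subset[OF interval, of x y] is_meanD[OF mean_MN_limit, of x y] by auto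

lemma invariant_mean_MN_limit: "invariant_mean I M N (MN_limit M N)"
  unfolding invariant_mean_def
proof (intro ballI)
  fix x y assume "x \<in> I" "y \<in> I"
  have "(\<lambda>n. MN_iter M N n (M x y, N x y)) \<longlonglongrightarrow> (MN_limit M N x y, MN_limit M N x y)"
    using LIMSEQ_Suc[OF tendsto_MN_iter_MN_limit[OF \<open>x \<in> I\<close> \<open>y \<in> I\<close>]] by (simp add: MN_iter_Suc_right)
  then show "MN_limit M N (M x y) (N x y) = MN_limit M N x y"
    by (rule MN_limit_eqI)
qed

lemma invariant_mean_unique:
  assumes "is_mean I K" "invariant_mean I M N K" "x \<in> I" "y \<in> I"
  shows "K x y = MN_limit M N x y"
proof -
  have xy: "(x, y) \<in> I \<times> I"
    using assms(3,4) by simp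
  have "\<bar>K x y - MN_limit M N x y\<bar> \<le> spread (MN_iter M N n (x, y))" for n
    using invariant_mean_between_MN_iter[OF maps_into assms(1,2) xy, of n]
      MN_limit_between[OF assms(3,4), of n]
    unfolding spread_eq_max_minus_min abs_le_iff prod.case by linarith
  then have "\<bar>K x y - MN_limit M N x y\<bar> \<le> 0"
    by (intro LIMSEQ_le_const[OF spread_MN_iter_tendsto_0[OF xy]]) auto
  then show ?thesis
    by simp
qed

lemma uniform_limit_MN_iter:
  assumes "compact C" "C \<subseteq> I \<times> I"
  shows "uniform_limit C (MN_iter M N) (\<lambda>(x, y). (MN_limit M N x y, MN_limit M N x y)) sequentially"
proof (rule metric_uniform_limit_imp_uniform_limit)
  show "uniform_limit C (\<lambda>n z. spread (MN_iter M N n z)) (\<lambda>_. 0) sequentially"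
  proof (rule Dini_uniform_limit)
    show "continuous_on C (\<lambda>z. spread (MN_iter M N n z))" for n
      using continuous_on_subset[OF continuous_on_MN_iter[OF maps_into cont_M cont_N] assms(2)]
      by (rule continuous_on_spread)
    show "spread (MN_iter M N (Suc n) z) \<le> spread (MN_iter M N n z)" if "z \<in> C" for n z
      using that assms(2) by (intro spread_MN_iter_Suc_le) blast
    show "(\<lambda>n. spread (MN_iter M N n z)) \<longlonglongrightarrow> 0" if "z \<in> C" for z
      using that assms(2) by (intro spread_MN_iter_tendsto_0) blast
  qed fact
  show "\<forall>\<^sub>F n in sequentially. \<forall>z\<in>C. dist (MN_iter M N n z) ((\<lambda>(x, y). (MN_limit M N x y, MN_limit M N x y)) z)
      \<le> dist (spread (MN_iter M N n z)) 0"
  proof (intro always_eventually allI ballI)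
    fix n z assume "z \<in> C"
    obtain x y where xy: "z = (x, y)"
      by (cases z)
    with \<open>z \<in> C\<close> assms(2) have "x \<in> I" "y \<in> I"
      by auto
    have "dist (MN_iter M N n (x, y)) (MN_limit M N x y, MN_limit M N x y) \<le> spread (MN_iter M N n (x, y))"
      using MN_limit_between[OF \<open>x \<in> I\<close> \<open>y \<in> I\<close>, of n] by (intro dist_diagonal_le_spread) simp_all
    then show "dist (MN_iter M N n z) ((\<lambda>(x, y). (MN_limit M N x y, MN_limit M N x y)) z)
      \<le> dist (spread (MN_iter M N n z)) 0"
      unfolding xy by (simp add: spread_def)
  qed
qed

end

theorem mainTheorem5:
  fixes I :: "real set" and M N :: "real \<Rightarrow> real \<Rightarrow> real"
  assumes "is_interval I"
    and "\<forall>x\<in>I. \<forall>y\<in>I. M x y \<in> I \<and> N x y \<in> I"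
    and "is_mean I M" and "is_mean I N"
    and "continuous_on (I \<times> I) (\<lambda>(x, y). M x y)"
    and "continuous_on (I \<times> I) (\<lambda>(x, y). N x y)"
    and "weakly_contractive I M N"
  shows "\<exists>K. is_mean I K \<and> (\<forall>x\<in>I. \<forall>y\<in>I. K x y \<in> I) \<and> invariant_mean I M N K
            \<and> (\<forall>K'. is_mean I K' \<and> (\<forall>x\<in>I. \<forall>y\<in>I. K' x y \<in> I) \<and> invariant_mean I M N K'
                    \<longrightarrow> (\<forall>x\<in>I. \<forall>y\<in>I. K' x y = K x y))
            \<and> (\<forall>C. compact C \<and> C \<subseteq> I \<times> I \<longrightarrow>
                 uniform_limit C (\<lambda>n. MN_iter M N n) (\<lambda>(x, y). (K x y, K x y)) sequentially)"
proof -
  interpret contractive_mean_pair I M N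
    by unfold_locales (fact assms)+
  show ?thesis
  proof (intro exI[of _ "MN_limit M N"] conjI allI impI ballI)
    show "is_mean I (MN_limit M N)" "invariant_mean I M N (MN_limit M N)"
      by (fact mean_MN_limit invariant_mean_MN_limit)+
    show "MN_limit M N x y \<in> I" if "x \<in> I" "y \<in> I" for x y
      using that by (rule MN_limit_in)
    show "K' x y = MN_limit M N x y"
      if "is_mean I K' \<and> (\<forall>x\<in>I. \<forall>y\<in>I. K' x y \<in> I) \<and> invariant_mean I M N K'" "x \<in> I" "y \<in> I"
      for K' x y
      using that by (intro invariant_mean_unique) simp_all
    show "uniform_limit C (\<lambda>n. MN_iter M N n) (\<lambda>(x, y). (MN_limit M N x y, MN_limit M N x y)) sequentially"
      if "compact C \<and> C \<subseteq> I \<times> I" for C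
      using that uniform_limit_MN_iter by simp
  qed
qed

end
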